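(* Let $H:\mathbb{R}^n\to\mathbb{R}$ be $\mu_H$-strongly convex with $\mu_H>0$, let $f^i_{j_i}:\mathbb{R}^n\to\mathbb{R}$ ($i\in[S]$, $j_i\in[I_i]$) be convex, and let $X\subset\mathbb{R}^n$ be nonempty, compact and convex. Let $m:=\sum_{i=1}^S I_i$, $F:=\sum_{i=1}^S\sum_{j_i=1}^{I_i} f^i_{j_i}$, and let $\{x_k\}_{k=1}^\infty$ be a sequence generated by FISM (described in the context) with positive stepsizes $\{\gamma_k\}_{k=1}^\infty$, $\{\lambda_k\}_{k=1}^\infty$. Suppose that $0<\gamma_k\lambda_k\mu_H\le 2m$ for all $k\ge 1$ and that $\{\lambda_k\}_{k=1}^\infty$ is nonincreasing. For each $k\ge1$ let $x^*_{\lambda_k}$ be the unique minimizer of $F+\lambda_k H$ over $X$. Then for all $k\ge 2$, $$\|x_{k+1}-x^*_{\lambda_k}\|^2\le\Big(1-\frac{\gamma_k\lambda_k\mu_H}{2m}\Big)\|x_k-x^*_{\lambda_{k-1}}\|^2+\frac{4mC_H^2}{\gamma_k\lambda_k\mu_H^3}\Big(1-\frac{\lambda_{k-1}}{\lambda_k}\Big)^2+\gamma_k^2 C,$$ where $C:=4m^3\Big(C_f^2+\frac{2\lambda_1^2C_H^2}{m^2}\Big)+2C_fm^2\Big(C_f+\frac{\lambda_1C_H}{m}\Big)$.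
   Context: Notation: $[s]:=\{1,\dots,s\}$; $P_X$ is the Euclidean metric projection onto $X$; $\partial$ denotes the convex subdifferential. Constants: $C_f>0$ is a constant such that for all $i\in[S]$, $j_i\in[I_i]$ and all $x,y\in X$, every $g\in\partial f^i_{j_i}(x)$ satisfies $\|g\|\le C_f$ and $|f^i_{j_i}(x)-f^i_{j_i}(y)|\le C_f\|x-y\|$; $C_H>0$ is a constant such that for all $x,y\in X$, every $g\in\partial H(x)$ satisfies $\|g\|\le C_H$, $|H(x)-H(y)|\le C_H\|x-y\|$ and $|H(x)|\le C_H$ (such constants exist by compactness of $X$). FISM (Federated Incremental Subgradient Method): given a starting point $x_1\in\mathbb{R}^n$ and positive stepsizes $\{\gamma_k\},\{\lambda_k\}$, for $k=1,2,\dots$: pick $\mathcal{H}_k\in\partial H(x_k)$; for every client $i\in[S]$ set $x^i_{k,1}=x_k$ and for $j_i=1,\dots,I_i$ pick $g^i_{k,j_i}\in\partial f^i_{j_i}(x^i_{k,j_i})$ and set $x^i_{k,j_i+1}=P_X\big[x^i_{k,j_i}-\gamma_k g^i_{k,j_i}-\frac{\gamma_k\lambda_k}{m}\mathcal{H}_k\big]$; then set $x^i_k=x^i_{k,I_i+1}$ and $x_{k+1}=\frac1S\sum_{i=1}^S x^i_k$. *)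

theory Defs
  imports "HOL-Analysis.Analysis"
begin

definition subdiff :: "('a::real_inner \<Rightarrow> real) \<Rightarrow> 'a \<Rightarrow> 'a set" where
  "subdiff h x = {g. \<forall>y. h y \<ge> h x + inner g (y - x)}"

definition strongly_convex :: "real \<Rightarrow> ('a::real_normed_vector \<Rightarrow> real) \<Rightarrow> bool" where
  "strongly_convex mu h \<longleftrightarrow>
     (\<forall>x y t. 0 \<le> t \<and> t \<le> 1 \<longrightarrow>
        h (t *\<^sub>R x + (1 - t) *\<^sub>R y)
          \<le> t * h x + (1 - t) * h y - mu / 2 * t * (1 - t) * (norm (x - y))\<^sup>2)"

abbreviation proj :: "'a::euclidean_space set \<Rightarrow> 'a \<Rightarrow> 'a" where
  "proj X y \<equiv> closest_point X y"

end

theory Submission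
  imports Defs
begin

(* Each client pass of FISM is an incremental projected subgradient method on its own
   functions, every step perturbed by the same regularisation direction (gamma lambda / m) Hs.
   Measured against a fixed point y of X, a pass obeys the classical incremental estimate,
   whose O(gamma^2) error comes from the drift of the iterates within the pass.  Averaging over
   the clients (convexity of the squared norm) and choosing y = x*_{lambda_k}, strong convexity
   of F + lambda_k H turns the linear terms into the contraction factor 1 - gamma_k lambda_k muH / m.
   The target moves, but comparing the optimality of x*_{lambda_k} and x*_{lambda_(k-1)} shows
   ||x*_{lambda_k} - x*_{lambda_(k-1)}|| <= (lambda_(k-1) - lambda_k) CH / (lambda_k muH);
   Young's inequality with weight a = gamma_k lambda_k muH / (2m) then trades half of the
   contraction for this shift. *)

lemma le_of_le_plus_scaled:
  fixes L c d :: real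
  assumes "\<And>t. 0 < t \<Longrightarrow> t \<le> 1 \<Longrightarrow> L \<le> c + t * d"
  shows "L \<le> c"
proof (rule tendsto_lowerbound)
  show "((\<lambda>t. c + t * d) \<longlongrightarrow> c) (at_right 0)"
    by (auto intro!: tendsto_eq_intros)
  show "\<forall>\<^sub>F t in at_right 0. L \<le> c + t * d"
    by (rule eventually_mono[OF eventually_at_right_real[of 0 1]]) (use assms in auto)
qed simp

lemma strongly_convex_subdiff_ineq:
  fixes h :: "'a::real_inner \<Rightarrow> real"
  assumes sc: "strongly_convex mu h" and g: "g \<in> subdiff h x"
  shows "h x + inner g (y - x) + mu / 2 * (norm (y - x))\<^sup>2 \<le> h y"
proof (rule le_of_le_plus_scaled)
  fix t :: real assume t: "0 < t" "t \<le> 1"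
  define z where "z = t *\<^sub>R y + (1 - t) *\<^sub>R x"
  have "h x + inner g (z - x) \<le> h z"
    using g by (simp add: subdiff_def)
  moreover have "z - x = t *\<^sub>R (y - x)"
    unfolding z_def by (simp add: algebra_simps)
  ultimately have "h x + t * inner g (y - x) \<le> h z"
    by simp
  also have "h z \<le> t * h y + (1 - t) * h x - mu / 2 * t * (1 - t) * (norm (y - x))\<^sup>2"
    using sc t unfolding strongly_convex_def z_def by simp
  finally have "t * (h x + inner g (y - x) + mu / 2 * (norm (y - x))\<^sup>2)
      \<le> t * (h y + t * (mu / 2 * (norm (y - x))\<^sup>2))"
    by (simp add: algebra_simps diff_divide_distrib)
  with t show "h x + inner g (y - x) + mu / 2 * (norm (y - x))\<^sup>2
      \<le> h y + t * (mu / 2 * (norm (y - x))\<^sup>2)"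
    by simp
qed

lemma strongly_convex_growth_at_min:
  fixes \<phi> :: "'a::real_normed_vector \<Rightarrow> real"
  assumes sc: "strongly_convex mu \<phi>" and X: "convex X" "y \<in> X" "u \<in> X"
    and min: "\<And>v. v \<in> X \<Longrightarrow> \<phi> y \<le> \<phi> v"
  shows "\<phi> y + mu / 2 * (norm (u - y))\<^sup>2 \<le> \<phi> u"
proof (rule le_of_le_plus_scaled)
  fix t :: real assume t: "0 < t" "t \<le> 1"
  have "t *\<^sub>R u + (1 - t) *\<^sub>R y \<in> X"
    using X t by (simp add: convex_def)
  then have "\<phi> y \<le> \<phi> (t *\<^sub>R u + (1 - t) *\<^sub>R y)" by (rule min)
  also have "\<dots> \<le> t * \<phi> u + (1 - t) * \<phi> y - mu / 2 * t * (1 - t) * (norm (u - y))\<^sup>2"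
    using sc t unfolding strongly_convex_def by simp
  finally have "t * (\<phi> y + mu / 2 * (norm (u - y))\<^sup>2) \<le> t * (\<phi> u + t * (mu / 2 * (norm (u - y))\<^sup>2))"
    by (simp add: algebra_simps diff_divide_distrib)
  with t show "\<phi> y + mu / 2 * (norm (u - y))\<^sup>2 \<le> \<phi> u + t * (mu / 2 * (norm (u - y))\<^sup>2)"
    by simp
qed

lemma strongly_convex_add_convex:
  fixes F H :: "'a::real_normed_vector \<Rightarrow> real"
  assumes F: "convex_on UNIV F" and H: "strongly_convex mu H" and c: "0 \<le> c"
  shows "strongly_convex (c * mu) (\<lambda>z. F z + c * H z)"
  unfolding strongly_convex_def
proof (intro allI impI)
  fix x y and t :: real assume t: "0 \<le> t \<and> t \<le> 1"
  have "F (t *\<^sub>R x + (1 - t) *\<^sub>R y) \<le> t * F x + (1 - t) * F y"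
    using convex_onD[OF F, of t y x] t by (simp add: add.commute)
  moreover have "c * H (t *\<^sub>R x + (1 - t) *\<^sub>R y)
      \<le> c * (t * H x + (1 - t) * H y - mu / 2 * t * (1 - t) * (norm (x - y))\<^sup>2)"
    using H t c unfolding strongly_convex_def by (simp add: mult_left_mono)
  ultimately show "F (t *\<^sub>R x + (1 - t) *\<^sub>R y) + c * H (t *\<^sub>R x + (1 - t) *\<^sub>R y)
      \<le> t * (F x + c * H x) + (1 - t) * (F y + c * H y) - c * mu / 2 * t * (1 - t) * (norm (x - y))\<^sup>2"
    by (simp add: algebra_simps)
qed

lemma convex_on_sum_fun:
  assumes "finite A" and "\<And>i. i \<in> A \<Longrightarrow> convex_on S (f i)" and "convex S"
  shows "convex_on S (\<lambda>x. \<Sum>i\<in>A. f i x)"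
  using assms by (induction A rule: finite_induct) (auto simp: convex_on_const)

lemma regularized_minimizer_dist_le:
  fixes F H :: "'a::real_normed_vector \<Rightarrow> real"
  assumes F: "convex_on UNIV F" and H: "strongly_convex mu H" and mu: "0 < mu"
    and X: "convex X"
    and y: "y \<in> X" "\<And>v. v \<in> X \<Longrightarrow> F y + lam * H y \<le> F v + lam * H v"
    and y': "y' \<in> X" "\<And>v. v \<in> X \<Longrightarrow> F y' + lam' * H y' \<le> F v + lam' * H v"
    and lam: "0 < lam" "lam \<le> lam'"
    and L: "0 \<le> L" "\<bar>H y - H y'\<bar> \<le> L * norm (y - y')"
  shows "norm (y - y') \<le> (lam' - lam) * L / (lam * mu)"
proof -
  define d where "d = norm (y - y')"
  have "F y + lam * H y + lam * mu / 2 * d\<^sup>2 \<le> F y' + lam * H y'"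
    using strongly_convex_growth_at_min[OF strongly_convex_add_convex[OF F H] X y(1) y'(1)] y(2) lam
    unfolding d_def by (simp add: norm_minus_commute)
  moreover have "F y' + lam' * H y' + lam' * mu / 2 * d\<^sup>2 \<le> F y + lam' * H y"
    using strongly_convex_growth_at_min[OF strongly_convex_add_convex[OF F H] X y'(1) y(1)] y'(2) lam
    unfolding d_def by simp
  \<comment> \<open>adding the two growth estimates cancels F\<close>
  ultimately have "(lam + lam') * mu / 2 * d\<^sup>2 \<le> (lam' - lam) * (H y - H y')"
    by (simp add: algebra_simps add_divide_distrib)
  moreover have "lam * mu * d\<^sup>2 \<le> (lam + lam') * mu / 2 * d\<^sup>2"
    using lam mu by (intro mult_right_mono) (auto simp: field_simps)
  moreover have "(lam' - lam) * (H y - H y') \<le> (lam' - lam) * (L * d)"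
    using L lam unfolding d_def by (intro mult_left_mono) auto
  ultimately have "lam * mu * d\<^sup>2 \<le> (lam' - lam) * (L * d)"
    by linarith
  then have "(lam * mu * d) * d \<le> ((lam' - lam) * L) * d"
    by (simp add: power2_eq_square algebra_simps)
  then have "lam * mu * d \<le> (lam' - lam) * L"
    using lam L by (cases "d = 0") (auto simp: d_def)
  then show ?thesis
    using lam mu unfolding d_def by (simp add: field_simps)
qed

lemma sq_add_le_weighted:
  fixes p q a :: real
  assumes "0 < a"
  shows "(p + q)\<^sup>2 \<le> (1 + a) * p\<^sup>2 + (1 + 1 / a) * q\<^sup>2"
proof -
  have "0 \<le> (a * p - q)\<^sup>2 / a"
    using assms by simp
  also have "\<dots> = (1 + a) * p\<^sup>2 + (1 + 1 / a) * q\<^sup>2 - (p + q)\<^sup>2"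
    using assms by (simp add: power2_eq_square field_simps)
  finally show ?thesis by simp
qed

lemma shifted_sq_norm_contraction:
  fixes u w :: "'a::real_normed_vector"
  assumes a: "0 < a" "a \<le> 1"
  shows "(1 - 2 * a) * (norm (u + w))\<^sup>2 \<le> (1 - a) * (norm u)\<^sup>2 + 2 / a * (norm w)\<^sup>2"
proof (cases "1 - 2 * a \<le> 0")
  case True
  then have "(1 - 2 * a) * (norm (u + w))\<^sup>2 \<le> 0"
    by (simp add: mult_nonpos_nonneg)
  also have "0 \<le> (1 - a) * (norm u)\<^sup>2 + 2 / a * (norm w)\<^sup>2"
    using a by simp
  finally show ?thesis .
next
  case False
  have "(norm (u + w))\<^sup>2 \<le> (norm u + norm w)\<^sup>2"
    by (simp add: norm_triangle_ineq power_mono)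
  also have "\<dots> \<le> (1 + a) * (norm u)\<^sup>2 + (1 + 1 / a) * (norm w)\<^sup>2"
    using a(1) by (rule sq_add_le_weighted)
  finally have "(1 - 2 * a) * (norm (u + w))\<^sup>2
      \<le> (1 - 2 * a) * ((1 + a) * (norm u)\<^sup>2 + (1 + 1 / a) * (norm w)\<^sup>2)"
    using False by (intro mult_left_mono) auto
  also have "\<dots> = (1 - 2 * a) * (1 + a) * (norm u)\<^sup>2 + (1 - 2 * a) * (1 + 1 / a) * (norm w)\<^sup>2"
    by (simp only: distrib_left[of "1 - 2 * a" "(1 + a) * _"] mult.assoc)
  also have "\<dots> \<le> (1 - a) * (norm u)\<^sup>2 + 2 / a * (norm w)\<^sup>2"
  proof (intro add_mono mult_right_mono)
    show "(1 - 2 * a) * (1 + a) \<le> 1 - a"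
      using a by (simp add: algebra_simps)
    show "(1 - 2 * a) * (1 + 1 / a) \<le> 2 / a"
      using a by (simp add: field_simps)
  qed simp_all
  finally show ?thesis .
qed

lemma sq_dist_moving_target_le:
  fixes x x' y y' :: "'a::real_normed_vector"
  assumes a: "0 < a" "a \<le> 1"
    and contraction: "(norm (x' - y))\<^sup>2 \<le> (1 - 2 * a) * (norm (x - y))\<^sup>2 + e"
    and drift: "norm (y - y') \<le> w"
  shows "(norm (x' - y))\<^sup>2 \<le> (1 - a) * (norm (x - y'))\<^sup>2 + 2 / a * w\<^sup>2 + e"
proof -
  have "(1 - 2 * a) * (norm ((x - y') + (y' - y)))\<^sup>2 \<le> (1 - a) * (norm (x - y'))\<^sup>2 + 2 / a * (norm (y' - y))\<^sup>2"
    using a by (rule shifted_sq_norm_contraction)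
  moreover have "(norm (y' - y))\<^sup>2 \<le> w\<^sup>2"
    using drift by (simp add: norm_minus_commute power_mono)
  then have "2 / a * (norm (y' - y))\<^sup>2 \<le> 2 / a * w\<^sup>2"
    using a by (intro mult_left_mono) auto
  ultimately show ?thesis
    using contraction by simp
qed

lemma sum_sq_le_sq_sum:
  fixes a :: "'i \<Rightarrow> real"
  assumes "finite A" and "\<And>i. i \<in> A \<Longrightarrow> 0 \<le> a i"
  shows "(\<Sum>i\<in>A. (a i)\<^sup>2) \<le> (\<Sum>i\<in>A. a i)\<^sup>2"
proof -
  have "(\<Sum>i\<in>A. (a i)\<^sup>2) \<le> (\<Sum>i\<in>A. a i * (\<Sum>l\<in>A. a l))"
    unfolding power2_eq_square using assms by (intro sum_mono mult_left_mono member_le_sum) auto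
  also have "\<dots> = (\<Sum>i\<in>A. a i)\<^sup>2"
    by (simp add: power2_eq_square sum_distrib_right)
  finally show ?thesis .
qed

lemma sq_norm_mean_le:
  fixes v :: "'i \<Rightarrow> 'a::real_normed_vector"
  assumes A: "finite A" "A \<noteq> {}"
  shows "(norm ((1 / card A) *\<^sub>R (\<Sum>i\<in>A. v i) - y))\<^sup>2 \<le> (\<Sum>i\<in>A. (norm (v i - y))\<^sup>2) / card A"
proof -
  have card: "real (card A) > 0"
    using A by (simp add: card_gt_0_iff)
  have "(1 / card A) *\<^sub>R (\<Sum>i\<in>A. v i) - y = (1 / card A) *\<^sub>R (\<Sum>i\<in>A. v i - y)"
    using card by (simp add: sum_subtractf scaleR_diff_right sum_constant_scaleR)
  then have "norm ((1 / card A) *\<^sub>R (\<Sum>i\<in>A. v i) - y) \<le> (\<Sum>i\<in>A. norm (v i - y)) / card A"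
    using norm_sum[of "\<lambda>i. v i - y" A] card by (simp add: divide_right_mono)
  then have "(norm ((1 / card A) *\<^sub>R (\<Sum>i\<in>A. v i) - y))\<^sup>2 \<le> ((\<Sum>i\<in>A. norm (v i - y)) / card A)\<^sup>2"
    by (intro power_mono) simp_all
  also have "\<dots> = (\<Sum>i\<in>A. norm (v i - y))\<^sup>2 / (card A)\<^sup>2"
    by (simp add: power_divide)
  also have "\<dots> \<le> (\<Sum>i\<in>A. (norm (v i - y))\<^sup>2) * card A / (card A)\<^sup>2"
    by (intro divide_right_mono sum_squared_le_sum_of_squares) simp
  also have "\<dots> = (\<Sum>i\<in>A. (norm (v i - y))\<^sup>2) / card A"
    using card by (simp add: power2_eq_square)
  finally show ?thesis .
qed

lemma mean_in_convex:
  assumes "convex X" "finite A" "A \<noteq> {}" "\<And>i. i \<in> A \<Longrightarrow> v i \<in> X"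
  shows "(1 / card A) *\<^sub>R (\<Sum>i\<in>A. v i) \<in> X"
proof -
  have "(\<Sum>i\<in>A. (1 / card A) *\<^sub>R v i) \<in> X"
    using assms by (intro convex_sum) (auto simp: card_gt_0_iff)
  then show ?thesis
    by (simp add: scaleR_sum_right)
qed

lemma norm_closest_point_le:
  fixes X :: "'a::euclidean_space set"
  assumes "convex X" "closed X" "X \<noteq> {}" "y \<in> X"
  shows "norm (proj X z - y) \<le> norm (z - y)"
  using closest_point_lipschitz[OF assms(1-3), of z y] closest_point_self[OF assms(4)]
  by (simp add: dist_norm)

lemma sq_norm_closest_point_step_le:
  fixes X :: "'a::euclidean_space set"
  assumes "convex X" "closed X" "X \<noteq> {}" "y \<in> X"
  shows "(norm (proj X (z - c *\<^sub>R v) - y))\<^sup>2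
    \<le> (norm (z - y))\<^sup>2 - 2 * c * inner v (z - y) + c\<^sup>2 * (norm v)\<^sup>2"
proof -
  have shift: "z - c *\<^sub>R v - y = (z - y) - c *\<^sub>R v"
    by (simp add: algebra_simps)
  have "norm (proj X (z - c *\<^sub>R v) - y) \<le> norm ((z - y) - c *\<^sub>R v)"
    using norm_closest_point_le[OF assms, of "z - c *\<^sub>R v"] unfolding shift .
  then have "(norm (proj X (z - c *\<^sub>R v) - y))\<^sup>2 \<le> (norm ((z - y) - c *\<^sub>R v))\<^sup>2"
    by (simp add: power_mono)
  also have "\<dots> = (norm (z - y))\<^sup>2 - 2 * c * inner v (z - y) + c\<^sup>2 * (norm v)\<^sup>2"
    using dot_norm_neg[of "z - y" "c *\<^sub>R v"] by (simp add: inner_commute power_mult_distrib)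
  finally show ?thesis .
qed

(* One client pass of FISM, in which the regularisation direction h = Hs_k and its weight
   b = lambda_k / m stay frozen. *)
locale projected_incremental_pass =
  fixes X :: "'a::euclidean_space set"
    and fs :: "nat \<Rightarrow> 'a \<Rightarrow> real" and gs xs :: "nat \<Rightarrow> 'a"
    and n :: nat and gam b Cf CH :: real and h :: 'a
  assumes convex: "convex X" and closed: "closed X" and nonempty: "X \<noteq> {}"
    and start: "xs 1 \<in> X"
    and step: "\<And>j. j \<in> {1..n} \<Longrightarrow> xs (j + 1) = proj X (xs j - gam *\<^sub>R gs j - (gam * b) *\<^sub>R h)"
    and subgrad: "\<And>j. j \<in> {1..n} \<Longrightarrow> gs j \<in> subdiff (fs j) (xs j)"
    and subgrad_bound: "\<And>j u s. j \<in> {1..n} \<Longrightarrow> u \<in> X \<Longrightarrow> s \<in> subdiff (fs j) u \<Longrightarrow> norm s \<le> Cf"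
    and lipschitz: "\<And>j u v. j \<in> {1..n} \<Longrightarrow> u \<in> X \<Longrightarrow> v \<in> X \<Longrightarrow> \<bar>fs j u - fs j v\<bar> \<le> Cf * norm (u - v)"
    and h_bound: "norm h \<le> CH"
    and gam_pos: "0 < gam" and b_nonneg: "0 \<le> b"
begin

lemma step_eq: "j \<in> {1..n} \<Longrightarrow> xs (Suc j) = proj X (xs j - gam *\<^sub>R (gs j + b *\<^sub>R h))"
  using step[of j] by (simp add: scaleR_add_right diff_diff_add)

lemma iterate_in_X:
  assumes "j \<in> {1..Suc n}"
  shows "xs j \<in> X"
proof -
  obtain d where j: "j = Suc d" "d \<le> n"
    using assms by (cases j) auto
  show ?thesis
  proof (cases d)
    case 0
    then show ?thesis using start j by simp
  next
    case (Suc i)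
    then have "xs j = proj X (xs d - gam *\<^sub>R (gs d + b *\<^sub>R h))"
      using step_eq[of d] j by simp
    then show ?thesis
      using closest_point_in_set[OF closed nonempty] by simp
  qed
qed

lemma direction_bound:
  assumes j: "j \<in> {1..n}"
  shows "norm (gs j + b *\<^sub>R h) \<le> Cf + b * CH"
proof -
  have "norm (gs j) \<le> Cf"
    using subgrad_bound[OF j iterate_in_X subgrad[OF j]] j by simp
  moreover have "norm (b *\<^sub>R h) \<le> b * CH"
    using h_bound b_nonneg by (simp add: mult_left_mono)
  ultimately show ?thesis
    using norm_triangle_ineq[of "gs j" "b *\<^sub>R h"] by linarith
qed

lemma iterate_drift: "d \<le> n \<Longrightarrow> norm (xs (Suc d) - xs 1) \<le> d * gam * (Cf + b * CH)"
proof (induction d)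
  case (Suc d)
  then have j: "Suc d \<in> {1..n}" by simp
  have "norm (xs (Suc (Suc d)) - xs (Suc d)) \<le> norm (gam *\<^sub>R (gs (Suc d) + b *\<^sub>R h))"
    using norm_closest_point_le[OF convex closed nonempty iterate_in_X[of "Suc d"],
        of "xs (Suc d) - gam *\<^sub>R (gs (Suc d) + b *\<^sub>R h)"] j step_eq[OF j]
    by simp
  also have "\<dots> \<le> gam * (Cf + b * CH)"
    using direction_bound[OF j] gam_pos by simp
  finally show ?case
    using Suc norm_triangle_ineq[of "xs (Suc (Suc d)) - xs (Suc d)" "xs (Suc d) - xs 1"]
    by (simp add: algebra_simps)
qed simp

lemma direction_inner_ge:
  assumes j: "j \<in> {1..n}" and y: "y \<in> X"
  shows "inner (gs j + b *\<^sub>R h) (xs j - y)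
    \<ge> (fs j (xs 1) - fs j y) + b * inner h (xs 1 - y) - (Cf + b * CH) * norm (xs j - xs 1)"
proof -
  \<comment> \<open>the subgradient sits at the drifted iterate xs j; Lipschitz bounds move it back to xs 1\<close>
  define e where "e = norm (xs j - xs 1)"
  have "fs j (xs j) + inner (gs j) (y - xs j) \<le> fs j y"
    using subgrad[OF j] by (simp add: subdiff_def)
  then have subgrad_ineq: "fs j (xs j) - fs j y \<le> inner (gs j) (xs j - y)"
    by (simp add: inner_diff_right)
  have "\<bar>fs j (xs j) - fs j (xs 1)\<bar> \<le> Cf * e"
    using lipschitz[OF j iterate_in_X start] j unfolding e_def by simp
  then have lipschitz_ineq: "fs j (xs 1) - Cf * e \<le> fs j (xs j)"
    by linarith
  have "- inner h (xs j - xs 1) \<le> norm h * e"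
    using Cauchy_Schwarz_ineq2[of h "xs j - xs 1"] unfolding e_def by linarith
  also have "\<dots> \<le> CH * e"
    using h_bound unfolding e_def by (simp add: mult_right_mono)
  finally have "inner h (xs 1 - y) - CH * e \<le> inner h (xs j - y)"
    by (simp add: inner_diff_right)
  then have "b * (inner h (xs 1 - y) - CH * e) \<le> b * inner h (xs j - y)"
    using b_nonneg by (rule mult_left_mono)
  then have h_ineq: "b * inner h (xs 1 - y) - b * CH * e \<le> b * inner h (xs j - y)"
    by (simp add: right_diff_distrib)
  have "inner (gs j + b *\<^sub>R h) (xs j - y) = inner (gs j) (xs j - y) + b * inner h (xs j - y)"
    by (simp add: inner_add_left)
  with subgrad_ineq lipschitz_ineq h_ineq show ?thesis
    unfolding e_def[symmetric] distrib_right by linarith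
qed

lemma iterate_sq_dist_le:
  assumes y: "y \<in> X"
  shows "d \<le> n \<Longrightarrow> (norm (xs (Suc d) - y))\<^sup>2 \<le> (norm (xs 1 - y))\<^sup>2
    - 2 * gam * (\<Sum>l=1..d. fs l (xs 1) - fs l y) - 2 * gam * b * d * inner h (xs 1 - y)
    + gam\<^sup>2 * d\<^sup>2 * (Cf + b * CH)\<^sup>2"
proof (induction d)
  case (Suc d)
  define j where "j = Suc d"
  define D where "D = Cf + b * CH"
  define v where "v = gs j + b *\<^sub>R h"
  have j: "j \<in> {1..n}"
    using Suc unfolding j_def by simp
  have "norm v \<le> D"
    using direction_bound[OF j] unfolding D_def v_def .
  then have "0 \<le> D"
    using norm_ge_zero order_trans by blast
  have v_sq: "gam\<^sup>2 * (norm v)\<^sup>2 \<le> gam\<^sup>2 * D\<^sup>2"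
    using \<open>norm v \<le> D\<close> by (intro mult_left_mono power_mono) auto
  have "D * norm (xs j - xs 1) \<le> D * (d * gam * D)"
    using iterate_drift[of d] Suc.prems \<open>0 \<le> D\<close> unfolding j_def D_def by (simp add: mult_left_mono)
  with direction_inner_ge[OF j y]
  have "(fs j (xs 1) - fs j y) + b * inner h (xs 1 - y) - d * gam * D\<^sup>2 \<le> inner v (xs j - y)"
    unfolding v_def D_def[symmetric] by (simp add: power2_eq_square mult.commute mult.left_commute)
  then have v_inner: "2 * gam * ((fs j (xs 1) - fs j y) + b * inner h (xs 1 - y) - d * gam * D\<^sup>2)
      \<le> 2 * gam * inner v (xs j - y)"
    using gam_pos by simp
  have "(norm (xs (Suc j) - y))\<^sup>2 \<le> (norm (xs j - y))\<^sup>2 - 2 * gam * inner v (xs j - y) + gam\<^sup>2 * (norm v)\<^sup>2"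
    unfolding step_eq[OF j] v_def by (rule sq_norm_closest_point_step_le[OF convex closed nonempty y])
  also have "\<dots> \<le> (norm (xs 1 - y))\<^sup>2 - 2 * gam * (\<Sum>l=1..d. fs l (xs 1) - fs l y)
      - 2 * gam * b * d * inner h (xs 1 - y) + gam\<^sup>2 * d\<^sup>2 * D\<^sup>2
      - 2 * gam * ((fs j (xs 1) - fs j y) + b * inner h (xs 1 - y) - d * gam * D\<^sup>2) + gam\<^sup>2 * D\<^sup>2"
    using Suc v_inner v_sq unfolding j_def D_def by linarith
  also have "\<dots> = (norm (xs 1 - y))\<^sup>2 - 2 * gam * (\<Sum>l=1..Suc d. fs l (xs 1) - fs l y)
      - 2 * gam * b * Suc d * inner h (xs 1 - y) + gam\<^sup>2 * (Suc d)\<^sup>2 * D\<^sup>2"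
    unfolding j_def by (simp add: power2_eq_square algebra_simps)
  finally show ?case
    unfolding j_def D_def .
qed simp

end

(* Round k of FISM: gam = gamma_k, lam = lambda_k, x = x_k, xc i j are the client iterates
   and x_next is x_(k+1). *)
locale fism_round =
  fixes X :: "'a::euclidean_space set" and f :: "nat \<Rightarrow> nat \<Rightarrow> 'a \<Rightarrow> real" and H :: "'a \<Rightarrow> real"
    and S m :: nat and I :: "nat \<Rightarrow> nat" and mu Cf CH gam lam :: real
    and x Hs :: 'a and xc g :: "nat \<Rightarrow> nat \<Rightarrow> 'a"
  assumes convex: "convex X" and closed: "closed X" and nonempty: "X \<noteq> {}"
    and S_pos: "1 \<le> S" and I_pos: "\<And>i. i \<in> {1..S} \<Longrightarrow> 1 \<le> I i"
    and m_def: "m = (\<Sum>i=1..S. I i)"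
    and H_sc: "strongly_convex mu H" and mu_nonneg: "0 \<le> mu"
    and x_in_X: "x \<in> X" and Hs: "Hs \<in> subdiff H x" and Hs_bound: "norm Hs \<le> CH"
    and init: "\<And>i. i \<in> {1..S} \<Longrightarrow> xc i 1 = x"
    and subgrad: "\<And>i j. i \<in> {1..S} \<Longrightarrow> j \<in> {1..I i} \<Longrightarrow> g i j \<in> subdiff (f i j) (xc i j)"
    and subgrad_bound: "\<And>i j u s. i \<in> {1..S} \<Longrightarrow> j \<in> {1..I i} \<Longrightarrow> u \<in> X \<Longrightarrow>
      s \<in> subdiff (f i j) u \<Longrightarrow> norm s \<le> Cf"
    and lipschitz: "\<And>i j u v. i \<in> {1..S} \<Longrightarrow> j \<in> {1..I i} \<Longrightarrow> u \<in> X \<Longrightarrow> v \<in> X \<Longrightarrow>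
      \<bar>f i j u - f i j v\<bar> \<le> Cf * norm (u - v)"
    and step: "\<And>i j. i \<in> {1..S} \<Longrightarrow> j \<in> {1..I i} \<Longrightarrow>
      xc i (j + 1) = proj X (xc i j - gam *\<^sub>R g i j - (gam * lam / m) *\<^sub>R Hs)"
    and gam_pos: "0 < gam" and lam_nonneg: "0 \<le> lam"
begin

abbreviation F :: "'a \<Rightarrow> real" where
  "F z \<equiv> \<Sum>i=1..S. \<Sum>j=1..I i. f i j z"

abbreviation x_next :: 'a where
  "x_next \<equiv> (1 / real S) *\<^sub>R (\<Sum>i=1..S. xc i (I i + 1))"

abbreviation noise :: real where
  "noise \<equiv> Cf + lam / m * CH"

lemma S_le_m: "S \<le> m"
  using sum_mono[of "{1..S}" "\<lambda>_. 1" I] I_pos unfolding m_def by simp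

lemma client_sq_dist_le:
  assumes i: "i \<in> {1..S}" and y: "y \<in> X"
  shows "(norm (xc i (I i + 1) - y))\<^sup>2 \<le> (norm (x - y))\<^sup>2 - 2 * gam * (\<Sum>j=1..I i. f i j x - f i j y)
    - 2 * gam * (lam / m) * I i * inner Hs (x - y) + gam\<^sup>2 * (I i)\<^sup>2 * noise\<^sup>2"
proof -
  interpret projected_incremental_pass X "f i" "g i" "xc i" "I i" gam "lam / m" Cf CH Hs
    using convex closed nonempty x_in_X init[OF i] step[OF i] subgrad[OF i] subgrad_bound[OF i]
      lipschitz[OF i] Hs_bound gam_pos lam_nonneg
    by unfold_locales auto
  show ?thesis
    using iterate_sq_dist_le[OF y order_refl] init[OF i] by simp
qed

lemma clients_sum_sq_dist_le:
  assumes y: "y \<in> X" and y_min: "\<And>v. v \<in> X \<Longrightarrow> F y + lam * H y \<le> F v + lam * H v"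
  shows "(\<Sum>i=1..S. (norm (xc i (I i + 1) - y))\<^sup>2)
    \<le> (S - gam * lam * mu) * (norm (x - y))\<^sup>2 + gam\<^sup>2 * m\<^sup>2 * noise\<^sup>2"
proof -
  define r where "r = (norm (x - y))\<^sup>2"
  define b where "b = lam / m"
  have "lam = b * m"
    using S_le_m S_pos unfolding b_def by simp
  have "(\<Sum>i=1..S. (norm (xc i (I i + 1) - y))\<^sup>2) \<le> (\<Sum>i=1..S. r - 2 * gam * (\<Sum>j=1..I i. f i j x - f i j y)
      - 2 * gam * b * I i * inner Hs (x - y) + gam\<^sup>2 * (I i)\<^sup>2 * noise\<^sup>2)"
    unfolding r_def b_def by (intro sum_mono client_sq_dist_le y)
  also have "\<dots> = S * r - 2 * gam * (F x - F y) - 2 * gam * b * (\<Sum>i=1..S. real (I i)) * inner Hs (x - y)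
      + gam\<^sup>2 * noise\<^sup>2 * (\<Sum>i=1..S. (real (I i))\<^sup>2)"
    by (simp add: sum.distrib sum_subtractf sum_distrib_left sum_distrib_right algebra_simps)
  also have "\<dots> \<le> S * r - 2 * gam * (F x - F y) - 2 * gam * lam * inner Hs (x - y) + gam\<^sup>2 * noise\<^sup>2 * m\<^sup>2"
  proof -
    have sum_I: "(\<Sum>i=1..S. real (I i)) = m"
      by (simp add: m_def)
    have "(\<Sum>i=1..S. (real (I i))\<^sup>2) \<le> (real m)\<^sup>2"
      using sum_sq_le_sq_sum[of "{1..S}" "\<lambda>i. real (I i)"] unfolding sum_I by simp
    then show ?thesis
      using sum_I \<open>lam = b * m\<close> mult_left_mono[of _ _ "gam\<^sup>2 * noise\<^sup>2"] by (simp add: mult.assoc)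
  qed
  also have "\<dots> \<le> (S - gam * lam * mu) * r + gam\<^sup>2 * m\<^sup>2 * noise\<^sup>2"
  proof -
    have "H x - H y + mu / 2 * r \<le> inner Hs (x - y)"
      using strongly_convex_subdiff_ineq[OF H_sc Hs, of y]
      unfolding r_def by (simp add: inner_diff_right norm_minus_commute)
    moreover have "F y + lam * H y \<le> F x + lam * H x"
      using y_min x_in_X .
    ultimately have "(F x - F y) + lam * inner Hs (x - y) \<ge> lam * mu / 2 * r"
      using lam_nonneg mult_left_mono[of "H x - H y + mu / 2 * r" "inner Hs (x - y)" lam]
      by (simp add: algebra_simps)
    then show ?thesis
      using gam_pos mult_left_mono[of "lam * mu / 2 * r" "(F x - F y) + lam * inner Hs (x - y)" "2 * gam"]
      by (simp add: algebra_simps)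
  qed
  finally show ?thesis
    unfolding r_def .
qed

lemma next_sq_dist_le:
  assumes y: "y \<in> X" and y_min: "\<And>v. v \<in> X \<Longrightarrow> F y + lam * H y \<le> F v + lam * H v"
  shows "(norm (x_next - y))\<^sup>2 \<le> (1 - gam * lam * mu / m) * (norm (x - y))\<^sup>2 + gam\<^sup>2 * m\<^sup>2 * noise\<^sup>2"
proof -
  define r where "r = (norm (x - y))\<^sup>2"
  have S: "1 \<le> real S" "real S \<le> m"
    using S_pos S_le_m by simp_all
  have "(norm (x_next - y))\<^sup>2 \<le> (\<Sum>i=1..S. (norm (xc i (I i + 1) - y))\<^sup>2) / S"
    using sq_norm_mean_le[of "{1..S}" "\<lambda>i. xc i (I i + 1)" y] S_pos by simp
  also have "\<dots> \<le> ((S - gam * lam * mu) * r + gam\<^sup>2 * m\<^sup>2 * noise\<^sup>2) / S"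
    using clients_sum_sq_dist_le[OF y y_min] S unfolding r_def by (simp add: divide_right_mono)
  also have "\<dots> = r - gam * lam * mu / S * r + gam\<^sup>2 * m\<^sup>2 * noise\<^sup>2 / S"
    using S by (simp add: field_simps)
  also have "\<dots> \<le> r - gam * lam * mu / m * r + gam\<^sup>2 * m\<^sup>2 * noise\<^sup>2"
  proof -
    have "gam * lam * mu / m * r \<le> gam * lam * mu / S * r"
      using S gam_pos lam_nonneg mu_nonneg unfolding r_def
      by (intro mult_right_mono divide_left_mono) auto
    moreover have "gam\<^sup>2 * m\<^sup>2 * noise\<^sup>2 / S \<le> gam\<^sup>2 * m\<^sup>2 * noise\<^sup>2 / 1"
      using S by (intro divide_left_mono) auto
    ultimately show ?thesis
      by linarith
  qed
  finally show ?thesis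
    unfolding r_def by (simp add: algebra_simps)
qed

lemma next_sq_dist_to_moving_minimizer_le:
  assumes F_convex: "convex_on UNIV F" and mu_pos: "0 < mu" and lam_pos: "0 < lam"
    and step_small: "gam * lam * mu \<le> 2 * m"
    and y: "y \<in> X" "\<And>v. v \<in> X \<Longrightarrow> F y + lam * H y \<le> F v + lam * H v"
    and y': "y' \<in> X" "\<And>v. v \<in> X \<Longrightarrow> F y' + lam' * H y' \<le> F v + lam' * H v"
    and lam_le: "lam \<le> lam'" and H_lipschitz: "\<bar>H y - H y'\<bar> \<le> CH * norm (y - y')"
  shows "(norm (x_next - y))\<^sup>2 \<le> (1 - gam * lam * mu / (2 * m)) * (norm (x - y'))\<^sup>2
    + 4 * m * CH\<^sup>2 / (gam * lam * mu ^ 3) * (1 - lam' / lam)\<^sup>2 + gam\<^sup>2 * m\<^sup>2 * noise\<^sup>2"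
proof -
  define a where "a = gam * lam * mu / (2 * m)"
  have m_pos: "0 < real m"
    using S_le_m S_pos by simp
  have a: "0 < a" "a \<le> 1"
    using gam_pos lam_pos mu_pos m_pos step_small unfolding a_def by auto
  have "(norm (x_next - y))\<^sup>2 \<le> (1 - 2 * a) * (norm (x - y))\<^sup>2 + gam\<^sup>2 * m\<^sup>2 * noise\<^sup>2"
    using next_sq_dist_le[OF y] unfolding a_def by simp
  moreover have "norm (y - y') \<le> (lam' - lam) * CH / (lam * mu)"
    using regularized_minimizer_dist_le[OF F_convex H_sc mu_pos convex y y' lam_pos lam_le _ H_lipschitz]
      Hs_bound norm_ge_zero[of Hs] by linarith
  ultimately have "(norm (x_next - y))\<^sup>2 \<le> (1 - a) * (norm (x - y'))\<^sup>2
      + 2 / a * ((lam' - lam) * CH / (lam * mu))\<^sup>2 + gam\<^sup>2 * m\<^sup>2 * noise\<^sup>2"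
    by (rule sq_dist_moving_target_le[OF a])
  also have "2 / a * ((lam' - lam) * CH / (lam * mu))\<^sup>2 = 4 * m * CH\<^sup>2 / (gam * lam * mu ^ 3) * (1 - lam' / lam)\<^sup>2"
    using gam_pos lam_pos mu_pos m_pos unfolding a_def
    by (simp add: field_simps power2_eq_square power3_eq_cube)
  finally show ?thesis
    unfolding a_def .
qed

end

lemma fism_noise_bound:
  fixes m Cf CH lam lam1 :: real
  assumes m: "1 \<le> m" and Cf: "0 \<le> Cf" and CH: "0 \<le> CH" and lam: "0 \<le> lam" "lam \<le> lam1"
  shows "m\<^sup>2 * (Cf + lam / m * CH)\<^sup>2
    \<le> 4 * m ^ 3 * (Cf\<^sup>2 + 2 * lam1\<^sup>2 * CH\<^sup>2 / m\<^sup>2) + 2 * Cf * m\<^sup>2 * (Cf + lam1 * CH / m)"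
proof -
  have "m\<^sup>2 * (Cf + lam / m * CH)\<^sup>2 = (m * Cf + lam * CH)\<^sup>2"
    using m by (simp add: power2_eq_square field_simps)
  also have "\<dots> \<le> (m * Cf + lam1 * CH)\<^sup>2"
    using m Cf CH lam by (intro power_mono add_left_mono mult_right_mono) auto
  also have "\<dots> = m\<^sup>2 * Cf\<^sup>2 + 2 * m * Cf * lam1 * CH + lam1\<^sup>2 * CH\<^sup>2"
    by (simp add: power2_eq_square algebra_simps)
  also have "\<dots> \<le> 4 * m ^ 3 * Cf\<^sup>2 + 8 * m * lam1\<^sup>2 * CH\<^sup>2 + 2 * Cf\<^sup>2 * m\<^sup>2 + 2 * m * Cf * lam1 * CH"
  proof -
    have "lam1\<^sup>2 * CH\<^sup>2 \<le> 8 * m * lam1\<^sup>2 * CH\<^sup>2"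
      using m mult_right_mono[of 1 "8 * m" "lam1\<^sup>2 * CH\<^sup>2"] by (simp add: mult.assoc)
    moreover have "0 \<le> 4 * m ^ 3 * Cf\<^sup>2"
      using m by simp
    moreover have "m\<^sup>2 * Cf\<^sup>2 \<le> 2 * Cf\<^sup>2 * m\<^sup>2"
      by simp
    ultimately show ?thesis
      by linarith
  qed
  also have "\<dots> = 4 * m ^ 3 * (Cf\<^sup>2 + 2 * lam1\<^sup>2 * CH\<^sup>2 / m\<^sup>2) + 2 * Cf * m\<^sup>2 * (Cf + lam1 * CH / m)"
    using m by (simp add: power2_eq_square power3_eq_cube field_simps)
  finally show ?thesis .
qed

theorem lemma2:
  fixes H :: "'a::euclidean_space \<Rightarrow> real"
    and f :: "nat \<Rightarrow> nat \<Rightarrow> 'a \<Rightarrow> real"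
    and S :: nat and I :: "nat \<Rightarrow> nat"
    and X :: "'a set"
    and muH Cf CH :: real
    and gamma lambda :: "nat \<Rightarrow> real"
    and x :: "nat \<Rightarrow> 'a"
    and Hs :: "nat \<Rightarrow> 'a"
    and xc :: "nat \<Rightarrow> nat \<Rightarrow> nat \<Rightarrow> 'a"
    and g :: "nat \<Rightarrow> nat \<Rightarrow> nat \<Rightarrow> 'a"
    and xstar :: "nat \<Rightarrow> 'a"
  defines "m \<equiv> (\<Sum>i=1..S. I i)"
    and "F \<equiv> (\<lambda>z. \<Sum>i=1..S. \<Sum>j=1..I i. f i j z)"
  assumes S_pos: "S \<ge> 1" and I_pos: "\<forall>i\<in>{1..S}. I i \<ge> 1"
    and muH_pos: "muH > 0" and H_sc: "strongly_convex muH H"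
    and f_conv: "\<forall>i\<in>{1..S}. \<forall>j\<in>{1..I i}. convex_on UNIV (f i j)"
    and X_ne: "X \<noteq> {}" and X_cpt: "compact X" and X_cvx: "convex X"
    and Cf_pos: "Cf > 0"
    and Cf_bd: "\<forall>i\<in>{1..S}. \<forall>j\<in>{1..I i}. \<forall>u\<in>X. \<forall>v\<in>X.
                  (\<forall>s\<in>subdiff (f i j) u. norm s \<le> Cf) \<and> \<bar>f i j u - f i j v\<bar> \<le> Cf * norm (u - v)"
    and CH_pos: "CH > 0"
    and CH_bd: "\<forall>u\<in>X. \<forall>v\<in>X. (\<forall>s\<in>subdiff H u. norm s \<le> CH)
                  \<and> \<bar>H u - H v\<bar> \<le> CH * norm (u - v) \<and> \<bar>H u\<bar> \<le> CH"
    and gamma_pos: "\<forall>k\<ge>1. gamma k > 0" and lambda_pos: "\<forall>k\<ge>1. lambda k > 0"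
    and step_bd: "\<forall>k\<ge>1. 0 < gamma k * lambda k * muH \<and> gamma k * lambda k * muH \<le> 2 * real m"
    and lambda_noninc: "\<forall>k\<ge>1. lambda (Suc k) \<le> lambda k"
    and FISM_H: "\<forall>k\<ge>1. Hs k \<in> subdiff H (x k)"
    and FISM_init: "\<forall>k\<ge>1. \<forall>i\<in>{1..S}. xc k i 1 = x k"
    and FISM_g: "\<forall>k\<ge>1. \<forall>i\<in>{1..S}. \<forall>j\<in>{1..I i}. g k i j \<in> subdiff (f i j) (xc k i j)"
    and FISM_step: "\<forall>k\<ge>1. \<forall>i\<in>{1..S}. \<forall>j\<in>{1..I i}.
                      xc k i (j + 1) = proj X (xc k i j - gamma k *\<^sub>R g k i j
                                         - (gamma k * lambda k / real m) *\<^sub>R Hs k)"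
    and FISM_avg: "\<forall>k\<ge>1. x (k + 1) = (1 / real S) *\<^sub>R (\<Sum>i=1..S. xc k i (I i + 1))"
    and xstar_min: "\<forall>k\<ge>1. xstar k \<in> X \<and>
                      (\<forall>y\<in>X. F (xstar k) + lambda k * H (xstar k) \<le> F y + lambda k * H y)"
  shows "\<forall>k\<ge>2.
     (norm (x (k + 1) - xstar k))\<^sup>2
       \<le> (1 - gamma k * lambda k * muH / (2 * real m)) * (norm (x k - xstar (k - 1)))\<^sup>2
         + 4 * real m * CH\<^sup>2 / (gamma k * lambda k * muH ^ 3) * (1 - lambda (k - 1) / lambda k)\<^sup>2
         + (gamma k)\<^sup>2 * (4 * real m ^ 3 * (Cf\<^sup>2 + 2 * (lambda 1)\<^sup>2 * CH\<^sup>2 / (real m)\<^sup>2)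
                          + 2 * Cf * (real m)\<^sup>2 * (Cf + lambda 1 * CH / real m))"
proof (intro allI impI, goal_cases)
  case (1 k)
  then have k: "1 \<le> k" "1 \<le> k - 1" "Suc (k - 1) = k" by auto
  have X_closed: "closed X"
    using X_cpt by (rule compact_imp_closed)
  have x_in_X: "x k \<in> X"
  proof -
    have "xc (k - 1) i (I i + 1) \<in> X" if "i \<in> {1..S}" for i
      using FISM_step k(2) that I_pos closest_point_in_set[OF X_closed X_ne] by fastforce
    moreover have "x k = (1 / card {1..S}) *\<^sub>R (\<Sum>i=1..S. xc (k - 1) i (I i + 1))"
      using FISM_avg[rule_format, OF k(2)] k(3) by simp
    ultimately show ?thesis
      using mean_in_convex[OF X_cvx, of "{1..S}"] S_pos by simp
  qed
  interpret fism_round X f H S m I muH Cf CH "gamma k" "lambda k" "x k" "Hs k" "xc k" "g k"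
    using X_cvx X_closed X_ne S_pos I_pos muH_pos H_sc x_in_X FISM_H CH_bd FISM_init FISM_g Cf_bd FISM_step
      gamma_pos lambda_pos k(1)
    unfolding m_def by unfold_locales (auto simp: less_imp_le)
  have lambda_le: "lambda k \<le> lambda (k - 1)"
    using lambda_noninc[rule_format, OF k(2)] k(3) by simp
  have lambda_le_1: "lambda k \<le> lambda 1"
    using k(1) by (induction k rule: dec_induct) (use lambda_noninc in \<open>auto intro: order_trans\<close>)
  have F_convex: "convex_on UNIV F"
    unfolding F_def using f_conv by (intro convex_on_sum_fun) auto
  have "(norm (x (k + 1) - xstar k))\<^sup>2 \<le> (1 - gamma k * lambda k * muH / (2 * real m)) * (norm (x k - xstar (k - 1)))\<^sup>2
      + 4 * real m * CH\<^sup>2 / (gamma k * lambda k * muH ^ 3) * (1 - lambda (k - 1) / lambda k)\<^sup>2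
      + (gamma k)\<^sup>2 * (real m)\<^sup>2 * noise\<^sup>2"
    using next_sq_dist_to_moving_minimizer_le[OF F_convex[unfolded F_def] muH_pos] FISM_avg xstar_min
      lambda_pos step_bd lambda_le CH_bd k unfolding F_def by simp
  moreover have "(real m)\<^sup>2 * noise\<^sup>2 \<le> 4 * real m ^ 3 * (Cf\<^sup>2 + 2 * (lambda 1)\<^sup>2 * CH\<^sup>2 / (real m)\<^sup>2)
      + 2 * Cf * (real m)\<^sup>2 * (Cf + lambda 1 * CH / real m)"
    using fism_noise_bound[of "real m" Cf CH "lambda k" "lambda 1"] lambda_le_1
      lambda_pos[rule_format, OF k(1)] Cf_pos CH_pos S_le_m S_pos by simp
  then have "(gamma k)\<^sup>2 * ((real m)\<^sup>2 * noise\<^sup>2) \<le> (gamma k)\<^sup>2 * (4 * real m ^ 3 * (Cf\<^sup>2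
      + 2 * (lambda 1)\<^sup>2 * CH\<^sup>2 / (real m)\<^sup>2) + 2 * Cf * (real m)\<^sup>2 * (Cf + lambda 1 * CH / real m))"
    by (rule mult_left_mono) (rule zero_le_power2)
  ultimately show ?case
    by (simp only: mult.assoc)
qed

end
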